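(* Let $t<n/2$ and $S=\{\{3,4\},\{5,6\},\dots,\{2t+1,2t+2\}\}$. Then $\widehat{1_{\mathcal{F}_S}}(2(n-t,1^t))\ne 0$, where $\mathcal{F}_S=\{m\in\mathcal{M}_{2n}: S\subseteq m\}$.
   Context: $\mathcal{M}_{2n}$ is the set of perfect matchings of $K_{2n}$ on $[2n]$, with the natural action of $S_{2n}$; $m^*=\{\{1,2\},\{3,4\},\dots,\{2n-1,2n\}\}$. For $f\in\mathbb{R}[\mathcal{M}_{2n}]$ let $\tilde f(\sigma)=f(\sigma m^* )$ for $\sigma\in S_{2n}$, and for an irreducible representation $\rho$ of $S_{2n}$ let $\hat f(\rho)=\frac{1}{(2n)!}\sum_{\sigma\in S_{2n}}\tilde f(\sigma)\rho(\sigma)$. $2(n-t,1^t)$ denotes the irreducible of $S_{2n}$ indexed by the partition $(2(n-t),2,\dots,2)\vdash 2n$ with $t$ parts equal to $2$. $1_{\mathcal{F}_S}$ is the characteristic function of $\mathcal{F}_S$. *)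

theory Defs
  imports "HOL-Combinatorics.Combinatorics" Complex_Main
begin

definition perfect_matchings :: "nat \<Rightarrow> nat set set set" where
  "perfect_matchings n = {m. (\<forall>e\<in>m. card e = 2 \<and> e \<subseteq> {1..2*n}) \<and>
      (\<forall>x\<in>{1..2*n}. \<exists>!e. e \<in> m \<and> x \<in> e)}"

definition mstar :: "nat \<Rightarrow> nat set set" where
  "mstar n = {{2*i - 1, 2*i} | i. i \<in> {1..n}}"

definition act_matching :: "(nat \<Rightarrow> nat) \<Rightarrow> nat set set \<Rightarrow> nat set set" where
  "act_matching \<sigma> m = (\<lambda>e. \<sigma> ` e) ` m"

definition F_S :: "nat \<Rightarrow> nat set set \<Rightarrow> nat set set set" where
  "F_S n S = {m \<in> perfect_matchings n. S \<subseteq> m}"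

definition S_t :: "nat \<Rightarrow> nat set set" where
  "S_t t = {{2*i + 1, 2*i + 2} | i. i \<in> {1..t}}"

text \<open>A partition is a list of parts; cells of its Young diagram are (row, column).\<close>
definition cells :: "nat list \<Rightarrow> (nat \<times> nat) set" where
  "cells lam = {(i, j). i < length lam \<and> j < lam ! i}"

text \<open>Tableaux: bijective fillings of the cells with 1..N (N = |lam|), extended by 0.\<close>
definition tableaux :: "nat list \<Rightarrow> ((nat \<times> nat) \<Rightarrow> nat) set" where
  "tableaux lam = {t. bij_betw t (cells lam) {1..sum_list lam} \<and>
                      (\<forall>c. c \<notin> cells lam \<longrightarrow> t c = 0)}"

text \<open>The tabloid of a tableau, represented as the map sending each entry to its row.\<close>
definition tabloid :: "nat list \<Rightarrow> ((nat \<times> nat) \<Rightarrow> nat) \<Rightarrow> (nat \<Rightarrow> nat)" where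
  "tabloid lam t = (\<lambda>x. if x \<in> {1..sum_list lam} then fst (inv_into (cells lam) t x) else 0)"

definition colstab :: "nat list \<Rightarrow> ((nat \<times> nat) \<Rightarrow> nat) \<Rightarrow> (nat \<Rightarrow> nat) set" where
  "colstab lam t = {\<pi>. \<pi> permutes {1..sum_list lam} \<and>
      (\<forall>c\<in>cells lam. \<exists>d\<in>cells lam. snd d = snd c \<and> \<pi> (t c) = t d)}"

definition polytabloid :: "nat list \<Rightarrow> ((nat \<times> nat) \<Rightarrow> nat) \<Rightarrow> ((nat \<Rightarrow> nat) \<Rightarrow> real)" where
  "polytabloid lam t = (\<lambda>T. \<Sum>\<pi>\<in>colstab lam t.
      of_int (sign \<pi>) * (if T = tabloid lam (\<pi> \<circ> t) then 1 else 0))"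

definition specht :: "nat list \<Rightarrow> ((nat \<Rightarrow> nat) \<Rightarrow> real) set" where
  "specht lam = {v. \<exists>c. v = (\<lambda>T. \<Sum>t\<in>tableaux lam. c t * polytabloid lam t T)}"

text \<open>Permutation action on functions of tabloids: sigma maps tabloid {t} to {sigma o t}.\<close>
definition tab_act :: "(nat \<Rightarrow> nat) \<Rightarrow> ((nat \<Rightarrow> nat) \<Rightarrow> real) \<Rightarrow> ((nat \<Rightarrow> nat) \<Rightarrow> real)" where
  "tab_act \<sigma> v = (\<lambda>T. v (T \<circ> \<sigma>))"

text \<open>Fourier coefficient of g : S_N -> R at the Specht representation of lam, as a linear
  operator on the Specht module: v |-> (1/N!) sum_sigma g(sigma) rho(sigma) v.\<close>
definition fourier_op :: "nat list \<Rightarrow> ((nat \<Rightarrow> nat) \<Rightarrow> real) \<Rightarrow> ((nat \<Rightarrow> nat) \<Rightarrow> real) \<Rightarrow> ((nat \<Rightarrow> nat) \<Rightarrow> real)" where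
  "fourier_op lam g v = (\<lambda>T. (1 / fact (sum_list lam)) *
      (\<Sum>\<sigma>\<in>{\<sigma>. \<sigma> permutes {1..sum_list lam}}. g \<sigma> * tab_act \<sigma> v T))"

definition fourier_nonzero :: "nat list \<Rightarrow> ((nat \<Rightarrow> nat) \<Rightarrow> real) \<Rightarrow> bool" where
  "fourier_nonzero lam g \<longleftrightarrow> (\<exists>v\<in>specht lam. fourier_op lam g v \<noteq> (\<lambda>_. 0))"

text \<open>The partition 2(n-t,1^t) = (2(n-t), 2, ..., 2) with t parts equal to 2.\<close>
definition two_hook :: "nat \<Rightarrow> nat \<Rightarrow> nat list" where
  "two_hook n t = 2 * (n - t) # replicate t 2"

definition char_fun :: "nat set set set \<Rightarrow> nat set set \<Rightarrow> real" where
  "char_fun A m = (if m \<in> A then 1 else 0)"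

definition lift :: "nat \<Rightarrow> (nat set set \<Rightarrow> real) \<Rightarrow> (nat \<Rightarrow> nat) \<Rightarrow> real" where
  "lift n f \<sigma> = f (act_matching \<sigma> (mstar n))"

end

theory Submission
  imports Defs
begin

(* Evaluate the Fourier coefficient on the polytabloid e_tau of the tableau tau whose rows
   1..t are the pairs {2i+1, 2i+2} of S, at the tabloid {tau}.  The result is the average
   over all sigma with S contained in sigma m* of the signed number of column-stabiliser
   elements p with {tau} o sigma = {p tau}.  For such p the rows force p to send every pair
   {2i+1, 2i+2} onto a pair {2k-1, 2k} of m*, odd to odd.  Hence p acts in the same way on
   the two columns of length t+1, so it is the square of a permutation and is even.  All
   terms are therefore nonnegative, and sigma = p = id contributes 1. *)

lemma finite_cells: "finite (cells lam)"
proof -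
  have "cells lam = (SIGMA i:{..<length lam}. {..<lam ! i})"
    by (auto simp: cells_def)
  then show ?thesis by simp
qed

lemma finite_tableaux: "finite (tableaux lam)"
proof (rule finite_subset)
  show "tableaux lam \<subseteq> {f. \<forall>c. (c \<in> cells lam \<longrightarrow> f c \<in> {1..sum_list lam}) \<and>
                                    (c \<notin> cells lam \<longrightarrow> f c = 0)}"
    by (auto simp: tableaux_def bij_betw_def)
  show "finite \<dots>"
    by (intro finite_set_of_finite_funs finite_cells finite_atLeastAtMost)
qed

lemma polytabloid_in_specht:
  assumes "t \<in> tableaux lam"
  shows "polytabloid lam t \<in> specht lam"
proof -
  have "polytabloid lam t T = (\<Sum>s\<in>tableaux lam. of_bool (s = t) * polytabloid lam s T)" for T
    using assms by (simp add: finite_tableaux)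
  then show ?thesis
    unfolding specht_def by (intro CollectI exI[of _ "\<lambda>s. of_bool (s = t)"] ext)
qed

lemma finite_colstab: "finite (colstab lam t)"
  by (rule finite_subset[OF _ finite_permutations[of "{1..sum_list lam}"]])
     (auto simp: colstab_def)

lemma id_in_colstab: "id \<in> colstab lam t"
  by (auto simp: colstab_def permutes_id)

lemma tabloid_eq_iff:
  assumes f: "bij_betw f (cells lam) {1..sum_list lam}" and x: "x \<in> {1..sum_list lam}"
  shows "tabloid lam f x = i \<longleftrightarrow> (\<exists>c\<in>cells lam. fst c = i \<and> f c = x)"
proof -
  let ?c = "inv_into (cells lam) f x"
  have c: "?c \<in> cells lam" "f ?c = x"
    using f x by (auto simp: bij_betw_def intro: inv_into_into f_inv_into_f)
  have unique: "c = ?c" if "c \<in> cells lam" "f c = x" for c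
    using f that by (auto simp: bij_betw_def)
  have "tabloid lam f x = fst ?c"
    using x by (simp add: tabloid_def)
  then show ?thesis
    using c unique by metis
qed

lemma polytabloid_nonneg:
  assumes "\<And>p. p \<in> colstab lam t \<Longrightarrow> T = tabloid lam (p \<circ> t) \<Longrightarrow> sign p = 1"
  shows "0 \<le> polytabloid lam t T"
  unfolding polytabloid_def by (rule sum_nonneg) (simp add: assms)

lemma polytabloid_pos:
  assumes "\<And>p. p \<in> colstab lam t \<Longrightarrow> tabloid lam t = tabloid lam (p \<circ> t) \<Longrightarrow> sign p = 1"
  shows "0 < polytabloid lam t (tabloid lam t)"
  unfolding polytabloid_def
  by (rule sum_pos2[OF finite_colstab id_in_colstab]) (simp_all add: assms)

lemma fourier_op_polytabloid_pos:
  assumes nonneg: "\<And>\<sigma>. \<sigma> permutes {1..sum_list lam} \<Longrightarrow> 0 \<le> g \<sigma>"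
    and "0 < g id"
    and signs: "\<And>\<sigma> p. \<sigma> permutes {1..sum_list lam} \<Longrightarrow> g \<sigma> \<noteq> 0 \<Longrightarrow> p \<in> colstab lam t \<Longrightarrow>
                 tabloid lam t \<circ> \<sigma> = tabloid lam (p \<circ> t) \<Longrightarrow> sign p = 1"
  shows "0 < fourier_op lam g (polytabloid lam t) (tabloid lam t)"
proof -
  have "0 < (\<Sum>\<sigma>\<in>{\<sigma>. \<sigma> permutes {1..sum_list lam}}. g \<sigma> * polytabloid lam t (tabloid lam t \<circ> \<sigma>))"
  proof (rule sum_pos2)
    show "0 < g id * polytabloid lam t (tabloid lam t \<circ> id)"
      using \<open>0 < g id\<close> signs[OF permutes_id] by (simp add: polytabloid_pos)
    show "0 \<le> g \<sigma> * polytabloid lam t (tabloid lam t \<circ> \<sigma>)"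
      if "\<sigma> \<in> {\<sigma>. \<sigma> permutes {1..sum_list lam}}" for \<sigma>
      using that nonneg[of \<sigma>] signs[of \<sigma>] polytabloid_nonneg[of lam t "tabloid lam t \<circ> \<sigma>"]
      by (cases "g \<sigma> = 0") simp_all
  qed (simp_all add: finite_permutations permutes_id)
  then show ?thesis
    by (simp add: fourier_op_def tab_act_def)
qed

lemma first_pair_preserved:
  fixes p :: "nat \<Rightarrow> nat"
  assumes p: "p permutes {1..2*t+2}" and parity: "\<And>x. odd (p x) \<longleftrightarrow> odd x"
    and pairs: "\<And>j. 1 \<le> j \<Longrightarrow> j \<le> t \<Longrightarrow> p (2*j+2) = p (2*j+1) + 1"
  shows "p 2 = p 1 + 1"
proof -
  have "p 1 \<in> {1..2*t+2}" "odd (p 1)"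
    using permutes_in_image[OF p, of 1] parity[of 1] by auto
  then have y: "p 1 + 1 \<in> {1..2*t+2}" "even (p 1 + 1)"
    by (auto elim!: oddE)
  obtain z where z: "p z = p 1 + 1"
    using permutes_surj[OF p] by (metis surjD)
  have "z \<in> {1..2*t+2}" "even z"
    using y permutes_in_image[OF p, of z] parity[of z] unfolding z by auto
  then obtain j where j: "z = 2*j+2" "j \<le> t"
    by (intro that[of "z div 2 - 1"]) auto
  have "j = 0"
  proof (rule ccontr)
    assume "j \<noteq> 0"
    then have "p (2*j+1) = p 1"
      using pairs[of j] j z by simp
    then have "2*j+1 = 1"
      using permutes_inj[OF p] by (rule injD[rotated])
    then show False
      using \<open>j \<noteq> 0\<close> by simp
  qed
  then show ?thesis
    using j z by (simp add: numeral_2_eq_2)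
qed

lemma sign_eq_1_if_pairs_preserved:
  fixes p :: "nat \<Rightarrow> nat"
  assumes p: "p permutes {1..2*t+2}" and parity: "\<And>x. odd (p x) \<longleftrightarrow> odd x"
    and pairs: "\<And>j. j \<le> t \<Longrightarrow> p (2*j+2) = p (2*j+1) + 1"
  shows "sign p = 1"
proof -
  define S where "S = {1..2*t+2::nat}"
  \<comment> \<open>r sends 2j+1 to 2j+2 and 2j+2 to p (2j+1), so r \<circ> r = p\<close>
  define r where "r x = (if x \<in> S then if odd x then x + 1 else p (x - 1) else x)" for x
  have p_S: "p x \<in> S \<longleftrightarrow> x \<in> S" for x
    using permutes_in_image[OF p] by (simp add: S_def)
  have r_odd: "r x = x + 1" "x + 1 \<in> S" if "x \<in> S" "odd x" for x
    using that by (auto simp: r_def S_def elim!: oddE)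
  have r_even: "r x = p (x - 1)" "x - 1 \<in> S" if "x \<in> S" "even x" for x
    using that by (auto simp: r_def S_def elim!: evenE)
  have r_out: "r x = x" if "x \<notin> S" for x
    using that by (simp add: r_def)
  have "r \<circ> r = p"
  proof
    fix x
    consider "x \<in> S" "odd x" | "x \<in> S" "even x" | "x \<notin> S"
      by blast
    then show "(r \<circ> r) x = p x"
    proof cases
      case 1
      then show ?thesis
        using r_odd r_even[of "x + 1"] by simp
    next
      case 2
      then obtain j where j: "x = 2*j+2" "j \<le> t"
        by (intro that[of "x div 2 - 1"]) (auto simp: S_def)
      then have "2*j+1 \<in> S"
        by (simp add: S_def)
      then show ?thesis
        using 2 j r_even r_odd[of "p (2*j+1)"] pairs[of j] parity[of "2*j+1"] p_S by simp
    next
      case 3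
      then show ?thesis
        using r_out permutes_not_in[OF p] by (simp add: S_def)
    qed
  qed
  moreover have "r permutes S"
  proof (rule inj_imp_permutes)
    show "inj_on r S"
      using inj_on_imageI2[of r r S] permutes_inj_on[OF p] \<open>r \<circ> r = p\<close> by simp
    show "r x \<in> S" if "x \<in> S" for x
      using that r_odd r_even p_S by (cases "odd x") auto
  qed (simp_all add: r_out S_def)
  then have "permutation r"
    by (auto simp: S_def intro: permutes_imp_permutation)
  ultimately show ?thesis
    by (metis sign_compose sign_idempotent)
qed

lemma mstar_in_perfect_matchings: "mstar n \<in> perfect_matchings n"
  unfolding perfect_matchings_def
proof (intro CollectI conjI ballI)
  fix e
  assume "e \<in> mstar n"
  then obtain i where i: "i \<in> {1..n}" "e = {2*i-1, 2*i}"
    unfolding mstar_def by blast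
  then show "card e = 2" "e \<subseteq> {1..2*n}"
    by auto
next
  fix x :: nat
  assume x: "x \<in> {1..2*n}"
  define i where "i = (x + 1) div 2"
  have i: "i \<in> {1..n}" "x \<in> {2*i-1, 2*i}"
    using x unfolding i_def by auto
  show "\<exists>!e. e \<in> mstar n \<and> x \<in> e"
  proof (rule ex1I[of _ "{2*i-1, 2*i}"])
    show "{2*i-1, 2*i} \<in> mstar n \<and> x \<in> {2*i-1, 2*i}"
      using i unfolding mstar_def by blast
  next
    fix e
    assume e: "e \<in> mstar n \<and> x \<in> e"
    then obtain i' where i': "i' \<in> {1..n}" "e = {2*i'-1, 2*i'}"
      unfolding mstar_def by blast
    then have "i' = i"
      using e unfolding i_def by auto
    then show "e = {2*i-1, 2*i}"
      using i' by simp
  qed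
qed

context
  fixes n t :: nat
  assumes t_less_n: "t < n"
begin

lemma sum_list_two_hook: "sum_list (two_hook n t) = 2 * n"
  using t_less_n by (simp add: two_hook_def sum_list_replicate)

lemma cells_two_hook_iff:
  "(i, j) \<in> cells (two_hook n t) \<longleftrightarrow> (i = 0 \<and> j < 2 * (n - t)) \<or> (1 \<le> i \<and> i \<le> t \<and> j < 2)"
  by (cases i) (auto simp: cells_def two_hook_def nth_Cons')

text \<open>Row 0 holds 1, 2, 2t+3, ..., 2n and row i (1 \<le> i \<le> t) holds the pair {2i+1, 2i+2}
  of S, so column 0 consists of the odd and column 1 of the even numbers up to 2t+2, while all
  other columns are singletons.\<close>
definition hook_tableau :: "nat \<times> nat \<Rightarrow> nat" where
  "hook_tableau c = (if c \<in> cells (two_hook n t) then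
     if snd c < 2 then 2 * fst c + snd c + 1 else 2 * t + snd c + 1 else 0)"

lemma hook_tableau_bij: "bij_betw hook_tableau (cells (two_hook n t)) {1..2*n}"
proof (rule bij_betw_byWitness[where f' =
    "\<lambda>x. if x \<le> 2*t+2 then ((x - 1) div 2, (x - 1) mod 2) else (0, x - 2*t - 1)"])
qed (use t_less_n in \<open>auto simp: cells_two_hook_iff hook_tableau_def\<close>)

lemma hook_tableau_in_tableaux: "hook_tableau \<in> tableaux (two_hook n t)"
  using hook_tableau_bij by (simp add: tableaux_def sum_list_two_hook hook_tableau_def)

lemma colstab_hook_tableau:
  assumes "p \<in> colstab (two_hook n t) hook_tableau"
  shows "p permutes {1..2*t+2}" and "odd (p x) \<longleftrightarrow> odd x"
proof -
  have p: "p permutes {1..2*n}"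
    and columns: "\<And>c. c \<in> cells (two_hook n t) \<Longrightarrow>
      \<exists>d\<in>cells (two_hook n t). snd d = snd c \<and> p (hook_tableau c) = hook_tableau d"
    using assms by (auto simp: colstab_def sum_list_two_hook)
  have moves: "(x \<le> 2*t+2 \<longrightarrow> p x \<le> 2*t+2 \<and> (odd (p x) \<longleftrightarrow> odd x)) \<and> (2*t+2 < x \<longrightarrow> p x = x)"
    if x: "x \<in> {1..2*n}" for x
  proof -
    obtain i j where c: "(i, j) \<in> cells (two_hook n t)" "hook_tableau (i, j) = x"
      using hook_tableau_bij x unfolding bij_betw_def by (metis imageE prod.collapse)
    then obtain i' where "(i', j) \<in> cells (two_hook n t)" "p x = hook_tableau (i', j)"
      using columns by fastforce
    then show ?thesis
      using c by (auto simp: hook_tableau_def cells_two_hook_iff)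
  qed
  show "p permutes {1..2*t+2}"
    using moves by (intro permutes_superset[OF p]) auto
  show "odd (p x) \<longleftrightarrow> odd x"
  proof (cases "x \<in> {1..2*n}")
    case True
    then show ?thesis
      using moves[of x] by (cases "x \<le> 2*t+2") auto
  next
    case False
    then show ?thesis
      using permutes_not_in[OF p] by simp
  qed
qed

lemma tabloid_hook_tableau_row:
  assumes p: "p permutes {1..2*n}" and x: "x \<in> {1..2*n}" and j: "1 \<le> j" "j \<le> t"
  shows "tabloid (two_hook n t) (p \<circ> hook_tableau) x = j \<longleftrightarrow> x = p (2*j+1) \<or> x = p (2*j+2)"
proof -
  have "bij_betw (p \<circ> hook_tableau) (cells (two_hook n t)) {1..sum_list (two_hook n t)}"
    using bij_betw_trans[OF hook_tableau_bij permutes_imp_bij[OF p]] by (simp add: sum_list_two_hook)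
  then have "tabloid (two_hook n t) (p \<circ> hook_tableau) x = j \<longleftrightarrow>
      (\<exists>c\<in>cells (two_hook n t). fst c = j \<and> p (hook_tableau c) = x)"
    using x by (simp add: tabloid_eq_iff sum_list_two_hook)
  also have "\<dots> \<longleftrightarrow> (\<exists>c\<in>{(j, 0), (j, 1)}. p (hook_tableau c) = x)"
  proof -
    have "c \<in> cells (two_hook n t) \<and> fst c = j \<longleftrightarrow> c \<in> {(j, 0), (j, 1)}" for c
      using j by (cases c) (auto simp: cells_two_hook_iff)
    then show ?thesis
      by blast
  qed
  also have "\<dots> \<longleftrightarrow> x = p (2*j+1) \<or> x = p (2*j+2)"
    using j by (auto simp: hook_tableau_def cells_two_hook_iff)
  finally show ?thesis .
qed

lemma colstab_pair_preserved:
  assumes p: "p \<in> colstab (two_hook n t) hook_tableau"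
    and S: "S_t t \<subseteq> act_matching \<sigma> (mstar n)"
    and T: "tabloid (two_hook n t) hook_tableau \<circ> \<sigma> = tabloid (two_hook n t) (p \<circ> hook_tableau)"
    and j: "1 \<le> j" "j \<le> t"
  shows "p (2*j+2) = p (2*j+1) + 1"
proof -
  have p_perm: "p permutes {1..2*n}"
    using p by (simp add: colstab_def sum_list_two_hook)
  have "{2*j+1, 2*j+2} \<in> S_t t"
    using j unfolding S_t_def by (intro CollectI exI[of _ j]) simp
  then obtain k where k: "k \<in> {1..n}" "\<sigma> ` {2*k-1, 2*k} = {2*j+1, 2*j+2}"
    using S unfolding act_matching_def mstar_def by auto
  have row: "y = p (2*j+1) \<or> y = p (2*j+2)" if y: "y \<in> {2*k-1, 2*k}" for y
  proof -
    have "\<sigma> y \<in> {2*j+1, 2*j+2}"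
      using k y by blast
    moreover from this have "\<sigma> y \<in> {1..2*n}"
      using j t_less_n by auto
    ultimately have "tabloid (two_hook n t) hook_tableau (\<sigma> y) = j"
      using tabloid_hook_tableau_row[OF permutes_id _ j] by simp
    then have "tabloid (two_hook n t) (p \<circ> hook_tableau) y = j"
      using fun_cong[OF T, of y] by simp
    moreover have "y \<in> {1..2*n}"
      using k(1) y by auto
    ultimately show ?thesis
      using tabloid_hook_tableau_row[OF p_perm _ j] by blast
  qed
  have parity: "odd (p (2*j+1))" "even (p (2*j+2))"
    using colstab_hook_tableau(2)[OF p] by simp_all
  have "odd (2*k-1)"
    using k(1) by simp
  then have "p (2*j+1) = 2*k-1"
    using row[of "2*k-1", OF insertI1] parity(2) by metis
  moreover have "p (2*j+2) = 2*k"
    using row[of "2*k"] parity(1) by (metis dvd_triv_left insertCI)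
  ultimately show ?thesis
    using k(1) by simp
qed

lemma colstab_sign_eq_1:
  assumes p: "p \<in> colstab (two_hook n t) hook_tableau"
    and S: "S_t t \<subseteq> act_matching \<sigma> (mstar n)"
    and T: "tabloid (two_hook n t) hook_tableau \<circ> \<sigma> = tabloid (two_hook n t) (p \<circ> hook_tableau)"
  shows "sign p = 1"
proof -
  note perm = colstab_hook_tableau[OF p]
  have pairs: "p (2*j+2) = p (2*j+1) + 1" if "1 \<le> j" "j \<le> t" for j
    using colstab_pair_preserved[OF p S T that] .
  have "p 2 = p 1 + 1"
    using first_pair_preserved[OF perm pairs] .
  then have "p (2*j+2) = p (2*j+1) + 1" if "j \<le> t" for j
    using pairs[of j] that by (cases "j = 0") (simp_all add: numeral_2_eq_2)
  then show ?thesis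
    by (rule sign_eq_1_if_pairs_preserved[OF perm])
qed

lemma S_t_subset_mstar: "S_t t \<subseteq> mstar n"
proof
  fix e
  assume "e \<in> S_t t"
  then obtain i where i: "i \<in> {1..t}" "e = {2*i+1, 2*i+2}"
    unfolding S_t_def by blast
  then have "e = {2*(i+1)-1, 2*(i+1)}" "i + 1 \<in> {1..n}"
    using t_less_n by auto
  then show "e \<in> mstar n"
    unfolding mstar_def by blast
qed

end

theorem mainTheorem17:
  fixes n t :: nat
  assumes "2 * t < n"
  shows "fourier_nonzero (two_hook n t) (lift n (char_fun (F_S n (S_t t))))"
proof -
  have t_less_n: "t < n"
    using assms by simp
  let ?lam = "two_hook n t" and ?g = "lift n (char_fun (F_S n (S_t t)))" and ?\<tau> = "hook_tableau n t"
  have "0 < fourier_op ?lam ?g (polytabloid ?lam ?\<tau>) (tabloid ?lam ?\<tau>)"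
  proof (rule fourier_op_polytabloid_pos)
    show "0 \<le> ?g \<sigma>" for \<sigma>
      by (simp add: lift_def char_fun_def)
    show "0 < ?g id"
      using mstar_in_perfect_matchings S_t_subset_mstar[OF t_less_n]
      by (simp add: lift_def char_fun_def F_S_def act_matching_def)
    show "sign p = 1"
      if "\<sigma> permutes {1..sum_list ?lam}" "?g \<sigma> \<noteq> 0" "p \<in> colstab ?lam ?\<tau>"
        "tabloid ?lam ?\<tau> \<circ> \<sigma> = tabloid ?lam (p \<circ> ?\<tau>)" for \<sigma> p
      using colstab_sign_eq_1[OF t_less_n that(3) _ that(4)] that(2)
      by (simp add: lift_def char_fun_def F_S_def split: if_splits)
  qed
  then show ?thesis
    using polytabloid_in_specht[OF hook_tableau_in_tableaux[OF t_less_n]]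
    unfolding fourier_nonzero_def by force
qed

end
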